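(* Let $G$, $P$, $w$ be as in the context, with all edge costs positive integer multiples of $\delta>0$, where $\delta$ is the largest number dividing all edge costs. Let $s\neq t$ with at least one directed path from $s$ to $t$, let $d_s$ be the number of out-neighbours of $s$, and let $0<\alpha<1$ be such that $\epsilon_{st}(\alpha)=U_s^{\{t,\overline o\}}(\alpha)-L_{st}<\delta/d_s$. Then any out-neighbour $j$ of $s$ maximizing $\check P_{sj}(\alpha)$ over all out-neighbours of $s$ satisfies that the edge $e_{sj}$ lies on a shortest (minimum-cost) path from $s$ to $t$.
   Context: $G=(V,E)$ is a finite directed graph; each edge $e_{ij}\in E$ has a positive cost $w_{ij}$; $P$ is a row-stochastic transition matrix with $P_{ij}>0$ iff $e_{ij}\in E$. $L_{st}$ is the minimum total cost of a directed path from $s$ to $t$. Evaporating network $G_\alpha$: Markov chain on $V\cup\{o\}$ with $P_{ij}(\alpha)=P_{ij}\alpha^{w_{ij}}$ ($i,j\in V$), $P_{io}(\alpha)=1-\sum_jP_{ij}\alpha^{w_{ij}}$, $o$ absorbing. With $t,o$ absorbing and $\mathcal T=V\setminus\{t\}$: $Q_x=Q_x^{\{t,\overline o\}}(\alpha)$ is the probability the chain from $x$ is absorbed at $t$ ($Q_t=1$); $F(\alpha)=(I-P(\alpha)_{\mathcal T\mathcal T})^{-1}$; $F^{\{t,\overline o\}}_{sm}(\alpha)=F_{sm}(\alpha)Q_m/Q_s$; the avoidance hitting cost is $U_s^{\{t,\overline o\}}(\alpha)=\sum_{m\in\mathcal T}F^{\{t,\overline o\}}_{sm}(\alpha)r_m$,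 $r_m=\sum_iP_{mi}(\alpha)w_{mi}Q_i/Q_m$ (the expected walk cost from $s$ conditioned on absorption at $t$). Transformed edge probabilities: $\check P_{ij}(\alpha)=P_{ij}(\alpha)\,Q_j/Q_i$. *)

theory Defs
  imports "HOL-Analysis.Analysis"
begin

text \<open>Vertices: a finite type 'v (V = UNIV). The sink o is implicit (defective row mass).
  P :: transition matrix, w :: edge costs.\<close>

definition Pev :: "('v \<Rightarrow> 'v \<Rightarrow> real) \<Rightarrow> ('v \<Rightarrow> 'v \<Rightarrow> real) \<Rightarrow> real \<Rightarrow> 'v \<Rightarrow> 'v \<Rightarrow> real" where
  "Pev P w \<alpha> i j = P i j * \<alpha> powr (w i j)"

text \<open>Fundamental matrix F(alpha) = (I - P(alpha)_TT)^{-1}, T = V - {t}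
  (entries outside T x T set to 0).\<close>
definition Fmat :: "('v::finite \<Rightarrow> 'v \<Rightarrow> real) \<Rightarrow> ('v \<Rightarrow> 'v \<Rightarrow> real) \<Rightarrow> 'v \<Rightarrow> real \<Rightarrow> 'v \<Rightarrow> 'v \<Rightarrow> real" where
  "Fmat P w t \<alpha> = (THE F. (\<forall>x y. (x = t \<or> y = t) \<longrightarrow> F x y = 0) \<and>
      (\<forall>x\<in>-{t}. \<forall>y\<in>-{t}.
         (\<Sum>k\<in>-{t}. ((if x = k then 1 else 0) - Pev P w \<alpha> x k) * F k y) = (if x = y then 1 else 0)))"

text \<open>Absorption probability at t (t, o absorbing): Q_t = 1, Q_x = sum_m F_xm P_mt(alpha).\<close>
definition Qabs :: "('v::finite \<Rightarrow> 'v \<Rightarrow> real) \<Rightarrow> ('v \<Rightarrow> 'v \<Rightarrow> real) \<Rightarrow> 'v \<Rightarrow> real \<Rightarrow> 'v \<Rightarrow> real" where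
  "Qabs P w t \<alpha> x = (if x = t then 1 else (\<Sum>m\<in>-{t}. Fmat P w t \<alpha> x m * Pev P w \<alpha> m t))"

definition Fcond :: "('v::finite \<Rightarrow> 'v \<Rightarrow> real) \<Rightarrow> ('v \<Rightarrow> 'v \<Rightarrow> real) \<Rightarrow> 'v \<Rightarrow> real \<Rightarrow> 'v \<Rightarrow> 'v \<Rightarrow> real" where
  "Fcond P w t \<alpha> s m = Fmat P w t \<alpha> s m * Qabs P w t \<alpha> m / Qabs P w t \<alpha> s"

definition rcost :: "('v::finite \<Rightarrow> 'v \<Rightarrow> real) \<Rightarrow> ('v \<Rightarrow> 'v \<Rightarrow> real) \<Rightarrow> 'v \<Rightarrow> real \<Rightarrow> 'v \<Rightarrow> real" where
  "rcost P w t \<alpha> m = (\<Sum>i\<in>UNIV. Pev P w \<alpha> m i * w m i * Qabs P w t \<alpha> i / Qabs P w t \<alpha> m)"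

definition Uavoid :: "('v::finite \<Rightarrow> 'v \<Rightarrow> real) \<Rightarrow> ('v \<Rightarrow> 'v \<Rightarrow> real) \<Rightarrow> 'v \<Rightarrow> real \<Rightarrow> 'v \<Rightarrow> real" where
  "Uavoid P w t \<alpha> s = (\<Sum>m\<in>-{t}. Fcond P w t \<alpha> s m * rcost P w t \<alpha> m)"

definition Pcheck :: "('v::finite \<Rightarrow> 'v \<Rightarrow> real) \<Rightarrow> ('v \<Rightarrow> 'v \<Rightarrow> real) \<Rightarrow> 'v \<Rightarrow> real \<Rightarrow> 'v \<Rightarrow> 'v \<Rightarrow> real" where
  "Pcheck P w t \<alpha> i j = Pev P w \<alpha> i j * Qabs P w t \<alpha> j / Qabs P w t \<alpha> i"

definition is_path :: "('v \<times> 'v) set \<Rightarrow> 'v \<Rightarrow> 'v \<Rightarrow> 'v list \<Rightarrow> bool" where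
  "is_path E s t p \<longleftrightarrow> p \<noteq> [] \<and> hd p = s \<and> last p = t \<and>
     (\<forall>i < length p - 1. (p ! i, p ! (i + 1)) \<in> E)"

definition path_cost :: "('v \<Rightarrow> 'v \<Rightarrow> real) \<Rightarrow> 'v list \<Rightarrow> real" where
  "path_cost w p = (\<Sum>i < length p - 1. w (p ! i) (p ! (i + 1)))"

definition Lmin :: "('v \<times> 'v) set \<Rightarrow> ('v \<Rightarrow> 'v \<Rightarrow> real) \<Rightarrow> 'v \<Rightarrow> 'v \<Rightarrow> real" where
  "Lmin E w s t = Inf (path_cost w ` {p. is_path E s t p})"

end

theory Submission
  imports Defs
begin

text \<open>
  Let \<open>L\<^sub>x\<close> be the shortest-path cost from \<open>x\<close> to \<open>t\<close>. Off \<open>t\<close>, the quantity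
  \<open>Q\<^sub>x (U\<^sub>x - L\<^sub>x)\<close> satisfies a Poisson equation for the kernel \<open>P(\<alpha>)\<^sub>T\<^sub>T\<close> whose source at \<open>x\<close> is
  \<open>\<Sum>\<^sub>k P\<^sub>x\<^sub>k(\<alpha>) Q\<^sub>k (w\<^sub>x\<^sub>k + L\<^sub>k - L\<^sub>x)\<close>, a sum of edge slacks, each nonnegative by the triangle
  inequality. Evaporation makes the kernel strictly substochastic, so a minimum principle shows the
  solution is nonnegative and dominates its own source; dividing by \<open>Q\<^sub>s\<close> gives
  \<open>\<epsilon>\<^sub>s\<^sub>t \<ge> Pcheck\<^sub>s\<^sub>j (w\<^sub>s\<^sub>j + L\<^sub>j - L\<^sub>s)\<close> for every neighbour \<open>j\<close>. The transformed probabilities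
  \<open>Pcheck\<^sub>s\<^sub>j\<close> sum to 1 over the \<open>d\<^sub>s\<close> neighbours, so the maximal one is at least \<open>1/d\<^sub>s\<close>; and since all
  costs lie in \<open>\<delta>\<nat>\<close>, an edge off every shortest path has slack at least \<open>\<delta>\<close>. Hence such an edge
  would force \<open>\<epsilon>\<^sub>s\<^sub>t \<ge> \<delta>/d\<^sub>s\<close>.
\<close>

lemma substochastic_superharmonic_nonneg:
  fixes a :: "'a \<Rightarrow> 'a \<Rightarrow> real" and g :: "'a \<Rightarrow> real"
  assumes fin: "finite S"
    and a_nonneg: "\<And>x k. x \<in> S \<Longrightarrow> k \<in> S \<Longrightarrow> 0 \<le> a x k"
    and row_sum: "\<And>x. x \<in> S \<Longrightarrow> (\<Sum>k\<in>S. a x k) < 1"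
    and superharmonic: "\<And>x. x \<in> S \<Longrightarrow> (\<Sum>k\<in>S. a x k * g k) \<le> g x"
    and x: "x \<in> S"
  shows "0 \<le> g x"
proof (rule ccontr)
  assume "\<not> 0 \<le> g x"
  have "Min (g ` S) \<in> g ` S"
    using fin x by (intro Min_in) auto
  then obtain x0 where x0: "x0 \<in> S" "g x0 = Min (g ` S)"
    by auto
  then have x0_min: "g x0 \<le> g k" if "k \<in> S" for k
    using fin that by simp
  have neg: "g x0 < 0"
    using x0_min[OF x] \<open>\<not> 0 \<le> g x\<close> by simp
  have "(\<Sum>k\<in>S. a x0 k) * g x0 = (\<Sum>k\<in>S. a x0 k * g x0)"
    by (simp add: sum_distrib_right)
  also have "\<dots> \<le> (\<Sum>k\<in>S. a x0 k * g k)"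
    by (intro sum_mono mult_left_mono x0_min a_nonneg x0(1))
  also have "\<dots> \<le> g x0"
    using superharmonic[OF x0(1)] .
  also have "\<dots> < (\<Sum>k\<in>S. a x0 k) * g x0"
    using row_sum[OF x0(1)] neg by (simp add: mult_less_cancel_right_disj)
  finally show False by simp
qed

lemma substochastic_harmonic_eq_0:
  fixes a :: "'a \<Rightarrow> 'a \<Rightarrow> real" and g :: "'a \<Rightarrow> real"
  assumes fin: "finite S"
    and a_nonneg: "\<And>x k. x \<in> S \<Longrightarrow> k \<in> S \<Longrightarrow> 0 \<le> a x k"
    and row_sum: "\<And>x. x \<in> S \<Longrightarrow> (\<Sum>k\<in>S. a x k) < 1"
    and harmonic: "\<And>x. x \<in> S \<Longrightarrow> (\<Sum>k\<in>S. a x k * g k) = g x"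
    and x: "x \<in> S"
  shows "g x = 0"
proof -
  have "0 \<le> g x"
    using substochastic_superharmonic_nonneg[OF fin a_nonneg row_sum _ x] harmonic by simp
  moreover have "0 \<le> - g x"
    using substochastic_superharmonic_nonneg[where g = "\<lambda>k. - g k", OF fin a_nonneg row_sum _ x] harmonic
    by (simp add: sum_negf)
  ultimately show ?thesis by simp
qed

lemma sum_delta_minus:
  fixes f :: "'a \<Rightarrow> real"
  assumes "finite S" "x \<in> S"
  shows "(\<Sum>k\<in>S. ((if x = k then 1 else 0) - a k) * f k) = f x - (\<Sum>k\<in>S. a k * f k)"
  using assms by (simp add: left_diff_distrib sum_subtractf of_bool_def[symmetric])

definition reaches :: "('v \<times> 'v) set \<Rightarrow> 'v \<Rightarrow> 'v \<Rightarrow> bool" where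
  "reaches E x y \<longleftrightarrow> (\<exists>p. is_path E x y p)"

lemma is_path_Nil [simp]: "\<not> is_path E x y []"
  by (simp add: is_path_def)

lemma is_path_singleton [simp]: "is_path E x y [z] \<longleftrightarrow> z = x \<and> x = y"
  by (auto simp: is_path_def)

lemma is_path_Cons_Cons [simp]:
  "is_path E x y (x # k # q) \<longleftrightarrow> (x, k) \<in> E \<and> is_path E k y (k # q)"
  by (simp add: is_path_def All_less_Suc2 conj_ac)

lemma is_path_hd_tl: "is_path E x y p \<Longrightarrow> p = x # tl p"
  by (cases p) (simp_all add: is_path_def)

lemma path_cost_Cons_Cons [simp]: "path_cost w (x # k # q) = w x k + path_cost w (k # q)"
  by (simp add: path_cost_def sum.lessThan_Suc_shift del: sum.lessThan_Suc)

lemma is_path_Cons: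
  assumes "is_path E k y q" "(x, k) \<in> E"
  shows "is_path E x y (x # q)" "path_cost w (x # q) = w x k + path_cost w q"
proof -
  obtain q' where "q = k # q'"
    using is_path_hd_tl[OF assms(1)] by blast
  then show "is_path E x y (x # q)" "path_cost w (x # q) = w x k + path_cost w q"
    using assms by simp_all
qed

lemma reaches_refl: "reaches E x x"
  unfolding reaches_def by (rule exI[of _ "[x]"]) simp

lemma reaches_step: "(x, k) \<in> E \<Longrightarrow> reaches E k y \<Longrightarrow> reaches E x y"
  unfolding reaches_def using is_path_Cons(1) by metis

lemma Inf_nat_multiples_attained:
  fixes C :: "real set"
  assumes \<delta>: "\<delta> > 0" and C: "C \<noteq> {}" "\<And>c. c \<in> C \<Longrightarrow> \<exists>n::nat. c = real n * \<delta>"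
  shows "Inf C \<in> C"
proof -
  have ex: "\<exists>n::nat. real n * \<delta> \<in> C"
    using C by blast
  define n0 where "n0 = (LEAST n::nat. real n * \<delta> \<in> C)"
  have n0: "real n0 * \<delta> \<in> C"
    unfolding n0_def by (rule LeastI_ex[OF ex])
  have "real n0 * \<delta> \<le> c" if c: "c \<in> C" for c
  proof -
    obtain n where n: "c = real n * \<delta>"
      using C(2)[OF c] by blast
    have "n0 \<le> n"
      unfolding n0_def using c n by (intro Least_le) simp
    then show ?thesis
      using n \<delta> by (simp add: mult_right_mono)
  qed
  then have "Inf C = real n0 * \<delta>"
    by (intro cInf_eq_minimum n0)
  then show ?thesis
    using n0 by simp
qed

locale lattice_costs =
  fixes E :: "('v \<times> 'v) set" and w :: "'v \<Rightarrow> 'v \<Rightarrow> real" and \<delta> :: real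
  assumes delta_pos: "\<delta> > 0"
    and cost_lattice: "\<And>i j. (i, j) \<in> E \<Longrightarrow> \<exists>n::nat. w i j = real n * \<delta>"
begin

lemma path_cost_lattice:
  assumes "is_path E x y p"
  shows "\<exists>n::nat. path_cost w p = real n * \<delta>"
proof -
  have "\<forall>i\<in>{..<length p - 1}. (p ! i, p ! (i + 1)) \<in> E"
    using assms unfolding is_path_def by blast
  then have "\<forall>i\<in>{..<length p - 1}. \<exists>n::nat. w (p ! i) (p ! (i + 1)) = real n * \<delta>"
    using cost_lattice by blast
  then obtain n where "\<forall>i\<in>{..<length p - 1}. w (p ! i) (p ! (i + 1)) = real (n i) * \<delta>"
    by (metis bchoice)
  then have "path_cost w p = real (\<Sum>i<length p - 1. n i) * \<delta>"
    by (simp add: path_cost_def sum_distrib_right)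
  then show ?thesis
    by blast
qed

lemma path_cost_nonneg: "is_path E x y p \<Longrightarrow> 0 \<le> path_cost w p"
  using path_cost_lattice delta_pos by fastforce

lemma Lmin_le: "is_path E x y p \<Longrightarrow> Lmin E w x y \<le> path_cost w p"
  unfolding Lmin_def
  by (rule cInf_lower) (auto intro: bdd_belowI[of _ 0] path_cost_nonneg)

lemma Lmin_attained:
  assumes "reaches E x y"
  shows "\<exists>p. is_path E x y p \<and> path_cost w p = Lmin E w x y"
proof -
  have "Lmin E w x y \<in> path_cost w ` {p. is_path E x y p}"
    unfolding Lmin_def
    using assms path_cost_lattice
    by (intro Inf_nat_multiples_attained[OF delta_pos]) (auto simp: reaches_def)
  then show ?thesis
    by auto
qed

lemma Lmin_lattice: "reaches E x y \<Longrightarrow> \<exists>n::nat. Lmin E w x y = real n * \<delta>"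
  using Lmin_attained path_cost_lattice by metis

lemma Lmin_refl: "Lmin E w x x = 0"
proof -
  have "is_path E x x [x]"
    by simp
  then have "Lmin E w x x \<le> 0"
    using Lmin_le by (fastforce simp: path_cost_def)
  moreover have "0 \<le> Lmin E w x x"
    using Lmin_attained[OF reaches_refl] path_cost_nonneg by metis
  ultimately show ?thesis
    by simp
qed

lemma Lmin_triangle:
  assumes "(x, k) \<in> E" "reaches E k y"
  shows "Lmin E w x y \<le> w x k + Lmin E w k y"
proof -
  obtain q where q: "is_path E k y q" "path_cost w q = Lmin E w k y"
    using Lmin_attained[OF assms(2)] by blast
  show ?thesis
    using Lmin_le[OF is_path_Cons(1)[OF q(1) assms(1)]] is_path_Cons(2)[OF q(1) assms(1)] q(2)
    by simp
qed

lemma Lmin_gap: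
  assumes "(x, k) \<in> E" "reaches E k y" "w x k + Lmin E w k y \<noteq> Lmin E w x y"
  shows "Lmin E w x y + \<delta> \<le> w x k + Lmin E w k y"
proof -
  obtain n1 n2 n3 :: nat where n:
    "w x k = real n1 * \<delta>" "Lmin E w k y = real n2 * \<delta>" "Lmin E w x y = real n3 * \<delta>"
    using cost_lattice[OF assms(1)] Lmin_lattice[OF assms(2)]
      Lmin_lattice[OF reaches_step[OF assms(1,2)]] by metis
  have "n3 < n1 + n2"
    using Lmin_triangle[OF assms(1,2)] assms(3) delta_pos unfolding n
    by (simp add: distrib_right[symmetric])
  then have "real (n3 + 1) * \<delta> \<le> real (n1 + n2) * \<delta>"
    using delta_pos by (intro mult_right_mono) simp_all
  then show ?thesis
    unfolding n by (simp add: algebra_simps)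
qed


lemma shortest_path_via:
  assumes "(x, k) \<in> E" "reaches E k y" "w x k + Lmin E w k y = Lmin E w x y"
  shows "\<exists>p. is_path E x y p \<and> path_cost w p = Lmin E w x y \<and> length p \<ge> 2 \<and> p ! 1 = k"
proof -
  obtain q where q: "is_path E k y q" "path_cost w q = Lmin E w k y"
    using Lmin_attained[OF assms(2)] by blast
  moreover obtain q' where "q = k # q'"
    using is_path_hd_tl[OF q(1)] by blast
  ultimately show ?thesis
    using is_path_Cons[OF q(1) assms(1)] assms(3) by (intro exI[of _ "x # q"]) simp
qed
end

lemma sum_UNIV_eq_add_sum_Compl:
  fixes g :: "'a::finite \<Rightarrow> 'b::comm_monoid_add"
  shows "(\<Sum>k\<in>UNIV. g k) = g t + (\<Sum>k\<in>-{t}. g k)"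
  using sum.remove[of UNIV t g] by (simp add: Compl_eq_Diff_UNIV)

locale evaporating_network =
  fixes E :: "('v::finite \<times> 'v) set" and P w :: "'v \<Rightarrow> 'v \<Rightarrow> real"
    and \<alpha> :: real and t :: 'v
  assumes P_nonneg: "\<And>i j. P i j \<ge> 0"
    and P_stoch: "\<And>i. (\<Sum>j\<in>UNIV. P i j) = 1"
    and P_edge: "\<And>i j. P i j > 0 \<longleftrightarrow> (i, j) \<in> E"
    and w_pos: "\<And>i j. (i, j) \<in> E \<Longrightarrow> w i j > 0"
    and alpha_pos: "0 < \<alpha>" and alpha_less_1: "\<alpha> < 1"
begin

abbreviation "pe \<equiv> Pev P w \<alpha>"
abbreviation "F \<equiv> Fmat P w t \<alpha>"
abbreviation "Q \<equiv> Qabs P w t \<alpha>"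

lemma Pev_nonneg: "0 \<le> pe i j"
  unfolding Pev_def using P_nonneg by simp

lemma Pev_pos_iff: "0 < pe i j \<longleftrightarrow> (i, j) \<in> E"
  unfolding Pev_def using P_nonneg[of i j] alpha_pos
  by (simp add: zero_less_mult_iff P_edge[symmetric])

lemma Pev_eq_0: "(i, j) \<notin> E \<Longrightarrow> pe i j = 0"
  using Pev_nonneg Pev_pos_iff by (metis order_le_less)

lemma Pev_less: "(i, j) \<in> E \<Longrightarrow> pe i j < P i j"
  unfolding Pev_def using P_edge w_pos alpha_pos alpha_less_1 powr01_less_one by simp

lemma Pev_le: "pe i j \<le> P i j"
  using Pev_less Pev_eq_0 P_nonneg by (metis order_le_less)

lemma row_sum_lt_1: "(\<Sum>k\<in>S. pe i k) < 1"
proof -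
  obtain j where "(i, j) \<in> E"
    using P_stoch[of i] P_edge P_nonneg by (metis order_le_less sum.neutral zero_neq_one)
  have "(\<Sum>k\<in>S. pe i k) \<le> (\<Sum>k\<in>UNIV. pe i k)"
    by (intro sum_mono2) (simp_all add: Pev_nonneg)
  also have "\<dots> < (\<Sum>k\<in>UNIV. P i k)"
    using \<open>(i, j) \<in> E\<close> by (intro sum_strict_mono_ex1) (auto intro: Pev_le Pev_less)
  finally show ?thesis
    using P_stoch by simp
qed

lemma transient_harmonic_eq_0:
  assumes "\<And>x. x \<noteq> t \<Longrightarrow> (\<Sum>k\<in>-{t}. pe x k * d k) = d x" and "x \<noteq> t"
  shows "d x = 0"
  by (rule substochastic_harmonic_eq_0[where S = "-{t}" and a = pe and g = d])
    (use assms in \<open>simp_all add: Pev_nonneg row_sum_lt_1\<close>)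

definition I_minus_PTT :: "real^'v^'v" where
  "I_minus_PTT = (\<chi> i k. (if i = k then 1 else 0) - (if i \<noteq> t \<and> k \<noteq> t then pe i k else 0))"

lemma I_minus_PTT_row_sum:
  "(\<Sum>k\<in>UNIV. I_minus_PTT $ i $ k * f k) = (if i = t then f t else f i - (\<Sum>k\<in>-{t}. pe i k * f k))"
proof (cases "i = t")
  case True
  then show ?thesis
    by (simp add: I_minus_PTT_def of_bool_def[symmetric])
next
  case False
  have "(\<Sum>k\<in>UNIV. I_minus_PTT $ i $ k * f k) = (\<Sum>k\<in>-{t}. ((if i = k then 1 else 0) - pe i k) * f k)"
    using False by (simp add: sum_UNIV_eq_add_sum_Compl[of _ t] I_minus_PTT_def)
  then show ?thesis
    using False by (simp add: sum_delta_minus)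
qed

lemma inj_I_minus_PTT: "inj ((*v) I_minus_PTT)"
proof -
  have "v = 0" if v: "I_minus_PTT *v v = 0" for v
  proof -
    have row: "(\<Sum>k\<in>UNIV. I_minus_PTT $ i $ k * v $ k) = 0" for i
      using arg_cong[OF v, of "\<lambda>u. u $ i"] by (simp add: matrix_vector_mult_def)
    have "v $ x = 0" for x
    proof (cases "x = t")
      case True
      then show ?thesis
        using row[of t] by (simp add: I_minus_PTT_row_sum)
    next
      case False
      have "(\<Sum>k\<in>-{t}. pe y k * v $ k) = v $ y" if "y \<noteq> t" for y
        using row[of y] that by (simp add: I_minus_PTT_row_sum)
      then show ?thesis
        using transient_harmonic_eq_0 False by blast
    qed
    then show ?thesis
      by (simp add: vec_eq_iff)
  qed
  then show ?thesis
    by (simp add: linear_injective_0)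
qed


definition is_fundamental_matrix :: "('v \<Rightarrow> 'v \<Rightarrow> real) \<Rightarrow> bool" where
  "is_fundamental_matrix G \<longleftrightarrow> (\<forall>x y. (x = t \<or> y = t) \<longrightarrow> G x y = 0) \<and>
     (\<forall>x\<in>-{t}. \<forall>y\<in>-{t}.
        (\<Sum>k\<in>-{t}. ((if x = k then 1 else 0) - pe x k) * G k y) = (if x = y then 1 else 0))"

lemma is_fundamental_matrix_iff:
  "is_fundamental_matrix G \<longleftrightarrow> (\<forall>x y. (x = t \<or> y = t) \<longrightarrow> G x y = 0) \<and>
     (\<forall>x\<in>-{t}. \<forall>y\<in>-{t}. G x y = (if x = y then 1 else 0) + (\<Sum>k\<in>-{t}. pe x k * G k y))"
  unfolding is_fundamental_matrix_def by (simp add: sum_delta_minus diff_eq_eq)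

lemma fundamental_matrix_exists: "\<exists>G. is_fundamental_matrix G"
proof -
  obtain B where B: "I_minus_PTT ** B = mat 1"
    using inj_I_minus_PTT matrix_left_invertible_injective matrix_left_right_inverse by blast
  define G where "G x y = (if x = t \<or> y = t then 0 else B $ x $ y)" for x y
  have "G x y = (if x = y then 1 else 0) + (\<Sum>k\<in>-{t}. pe x k * G k y)" if "x \<noteq> t" "y \<noteq> t" for x y
  proof -
    have "(if x = y then 1 else 0) = (I_minus_PTT ** B) $ x $ y"
      using B by (simp add: mat_def)
    also have "\<dots> = B $ x $ y - (\<Sum>k\<in>-{t}. pe x k * B $ k $ y)"
      using that I_minus_PTT_row_sum[of x "\<lambda>k. B $ k $ y"] by (simp add: matrix_matrix_mult_def)
    also have "(\<Sum>k\<in>-{t}. pe x k * B $ k $ y) = (\<Sum>k\<in>-{t}. pe x k * G k y)"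
      using that by (intro sum.cong) (simp_all add: G_def)
    finally show ?thesis
      using that by (simp add: G_def)
  qed
  then have "is_fundamental_matrix G"
    unfolding is_fundamental_matrix_iff by (simp add: G_def)
  then show ?thesis
    by blast
qed

lemma fundamental_matrix_unique:
  assumes "is_fundamental_matrix G" "is_fundamental_matrix G'"
  shows "G = G'"
proof (intro ext)
  fix x y
  show "G x y = G' x y"
  proof (cases "x = t \<or> y = t")
    case True
    then have "G x y = 0" "G' x y = 0"
      using assms unfolding is_fundamental_matrix_def by blast+
    then show ?thesis
      by simp
  next
    case False
    have "(\<Sum>k\<in>-{t}. pe z k * (G k y - G' k y)) = G z y - G' z y" if "z \<noteq> t" for z
    proof -
      have "G z y = (if z = y then 1 else 0) + (\<Sum>k\<in>-{t}. pe z k * G k y)"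
        "G' z y = (if z = y then 1 else 0) + (\<Sum>k\<in>-{t}. pe z k * G' k y)"
        using assms False that unfolding is_fundamental_matrix_iff by simp_all
      then show ?thesis
        by (simp add: right_diff_distrib sum_subtractf)
    qed
    then show ?thesis
      using transient_harmonic_eq_0[of "\<lambda>k. G k y - G' k y" x] False by simp
  qed
qed

lemma is_fundamental_matrix_Fmat: "is_fundamental_matrix F"
proof -
  have "F = (THE G. is_fundamental_matrix G)"
    unfolding Fmat_def is_fundamental_matrix_def by (rule refl)
  then show ?thesis
    using fundamental_matrix_exists fundamental_matrix_unique by (metis theI)
qed

lemma Fmat_t: "F t y = 0" "F x t = 0"
  using is_fundamental_matrix_Fmat unfolding is_fundamental_matrix_iff by simp_all

lemma Fmat_eq: "x \<noteq> t \<Longrightarrow> y \<noteq> t \<Longrightarrow> F x y = (if x = y then 1 else 0) + (\<Sum>k\<in>-{t}. pe x k * F k y)"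
  using is_fundamental_matrix_Fmat unfolding is_fundamental_matrix_iff by blast

lemma Fmat_green:
  assumes x: "x \<noteq> t"
  shows "(\<Sum>m\<in>-{t}. F x m * c m) = c x + (\<Sum>k\<in>-{t}. pe x k * (\<Sum>m\<in>-{t}. F k m * c m))"
proof -
  have "(\<Sum>m\<in>-{t}. F x m * c m)
      = (\<Sum>m\<in>-{t}. (if x = m then c m else 0) + (\<Sum>k\<in>-{t}. pe x k * (F k m * c m)))"
    using x by (intro sum.cong) (simp_all add: Fmat_eq distrib_right sum_distrib_right mult.assoc)
  also have "\<dots> = c x + (\<Sum>m\<in>-{t}. \<Sum>k\<in>-{t}. pe x k * (F k m * c m))"
    using x by (simp add: sum.distrib)
  also have "\<dots> = c x + (\<Sum>k\<in>-{t}. \<Sum>m\<in>-{t}. pe x k * (F k m * c m))"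
    by (subst sum.swap) (rule refl)
  finally show ?thesis
    by (simp only: sum_distrib_left)
qed

lemma Qabs_t: "Q t = 1"
  by (simp add: Qabs_def)

lemma Qabs_harmonic:
  assumes "x \<noteq> t"
  shows "Q x = (\<Sum>k\<in>UNIV. pe x k * Q k)"
proof -
  have "Q x = pe x t + (\<Sum>k\<in>-{t}. pe x k * (\<Sum>m\<in>-{t}. F k m * pe m t))"
    using Fmat_green[OF assms] assms by (simp add: Qabs_def)
  also have "\<dots> = (\<Sum>k\<in>UNIV. pe x k * Q k)"
    by (simp add: sum_UNIV_eq_add_sum_Compl[of _ t] Qabs_def)
  finally show ?thesis .
qed

lemma Qabs_nonneg: "0 \<le> Q x"
proof (cases "x = t")
  case True
  then show ?thesis
    by (simp add: Qabs_t)
next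
  case False
  have superharmonic: "(\<Sum>k\<in>-{t}. pe y k * Q k) \<le> Q y" if "y \<in> -{t}" for y
  proof -
    have "(\<Sum>k\<in>-{t}. pe y k * Q k) \<le> pe y t * Q t + (\<Sum>k\<in>-{t}. pe y k * Q k)"
      using Pev_nonneg[of y t] by (simp add: Qabs_t)
    also have "\<dots> = Q y"
      using Qabs_harmonic[of y] sum_UNIV_eq_add_sum_Compl[of "\<lambda>k. pe y k * Q k" t] that
      by simp
    finally show ?thesis .
  qed
  show ?thesis
    by (rule substochastic_superharmonic_nonneg[where S = "-{t}" and a = pe and g = Q])
      (use False superharmonic in \<open>simp_all add: Pev_nonneg row_sum_lt_1\<close>)
qed

lemma Qabs_pos_path: "is_path E x t p \<Longrightarrow> 0 < Q x"
proof (induction p arbitrary: x)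
  case Nil
  then show ?case
    by simp
next
  case (Cons a q)
  show ?case
  proof (cases "x = t")
    case True
    then show ?thesis
      by (simp add: Qabs_t)
  next
    case False
    have "a = x"
      using is_path_hd_tl[OF Cons.prems] by simp
    obtain k q' where q: "q = k # q'"
      using Cons.prems False \<open>a = x\<close> by (cases q) simp_all
    have "(x, k) \<in> E" "0 < Q k"
      using Cons.prems Cons.IH unfolding q \<open>a = x\<close> by simp_all
    then have "0 < pe x k * Q k"
      by (simp add: Pev_pos_iff)
    also have "\<dots> \<le> (\<Sum>k\<in>UNIV. pe x k * Q k)"
      by (intro member_le_sum) (simp_all add: Pev_nonneg Qabs_nonneg)
    finally show ?thesis
      using Qabs_harmonic[OF False] by simp
  qed
qed

lemma Qabs_eq_0:
  assumes "\<not> reaches E x t"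
  shows "Q x = 0"
proof -
  let ?S = "{y. \<not> reaches E y t}"
  have harmonic: "(\<Sum>k\<in>?S. pe y k * Q k) = Q y" if "y \<in> ?S" for y
  proof -
    have "y \<noteq> t"
      using that reaches_refl[of E t] by auto
    have "pe y k = 0" if "reaches E k t" for k
      using \<open>y \<in> ?S\<close> that reaches_step Pev_pos_iff Pev_nonneg by (metis mem_Collect_eq order_le_less)
    then have "(\<Sum>k\<in>UNIV. pe y k * Q k) = (\<Sum>k\<in>?S. pe y k * Q k)"
      by (intro sum.mono_neutral_right) auto
    then show ?thesis
      using Qabs_harmonic[OF \<open>y \<noteq> t\<close>] by simp
  qed
  show ?thesis
    by (rule substochastic_harmonic_eq_0[where S = ?S and a = pe and g = Q])
      (use assms harmonic in \<open>simp_all add: Pev_nonneg row_sum_lt_1\<close>)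
qed

lemma Qabs_pos_iff: "0 < Q x \<longleftrightarrow> reaches E x t"
  using Qabs_pos_path Qabs_eq_0 unfolding reaches_def by fastforce


lemma Pcheck_row_sum:
  assumes "x \<noteq> t" "reaches E x t"
  shows "(\<Sum>k | (x, k) \<in> E. Pcheck P w t \<alpha> x k) = 1"
proof -
  have "(\<Sum>k | (x, k) \<in> E. pe x k * Q k) = (\<Sum>k\<in>UNIV. pe x k * Q k)"
    by (rule sum.mono_neutral_left) (auto simp: Pev_eq_0)
  also have "\<dots> = Q x"
    using Qabs_harmonic[OF assms(1)] by simp
  finally show ?thesis
    using Qabs_pos_iff[of x] assms(2) by (simp add: Pcheck_def sum_divide_distrib[symmetric])
qed

lemma max_Pcheck_ge_inverse_degree:
  assumes "x \<noteq> t" "reaches E x t" "(x, j) \<in> E"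
    and "\<And>k. (x, k) \<in> E \<Longrightarrow> Pcheck P w t \<alpha> x k \<le> Pcheck P w t \<alpha> x j"
  shows "1 / real (card {k. (x, k) \<in> E}) \<le> Pcheck P w t \<alpha> x j"
proof -
  have "0 < card {k. (x, k) \<in> E}"
    using assms(3) by (auto simp: card_gt_0_iff)
  moreover have "1 \<le> real (card {k. (x, k) \<in> E}) * Pcheck P w t \<alpha> x j"
    using Pcheck_row_sum[OF assms(1,2)] sum_bounded_above[of "{k. (x, k) \<in> E}" "Pcheck P w t \<alpha> x"]
      assms(4) by simp
  ultimately show ?thesis
    by (simp add: divide_le_eq mult.commute)
qed

lemma reaches_of_Pcheck_pos: "0 < Pcheck P w t \<alpha> x j \<Longrightarrow> reaches E j t"
  using Qabs_nonneg[of j] Qabs_pos_iff[of j] by (auto simp: Pcheck_def order_le_less)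

text \<open>\<open>total_cost x\<close> is \<open>Q\<^sub>x U\<^sub>x\<close>: the expected cost of the walk from \<open>x\<close>, counted on the event
  of absorption at \<open>t\<close>.\<close>
definition step_cost :: "'v \<Rightarrow> real" where
  "step_cost m = (\<Sum>i\<in>UNIV. pe m i * w m i * Q i)"

definition total_cost :: "'v \<Rightarrow> real" where
  "total_cost x = (\<Sum>m\<in>-{t}. F x m * step_cost m)"

lemma step_cost_eq_0:
  assumes "m \<noteq> t" "Q m = 0"
  shows "step_cost m = 0"
proof -
  have "(\<Sum>i\<in>UNIV. pe m i * Q i) = 0"
    using Qabs_harmonic[OF assms(1)] assms(2) by simp
  then have "pe m i = 0 \<or> Q i = 0" for i
    using sum_nonneg_eq_0_iff[of UNIV "\<lambda>i. pe m i * Q i"] Pev_nonneg Qabs_nonneg by simp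
  then show ?thesis
    unfolding step_cost_def by (intro sum.neutral) auto
qed

lemma total_cost_t: "total_cost t = 0"
  by (simp add: total_cost_def Fmat_t)

lemma total_cost_eq: "x \<noteq> t \<Longrightarrow> total_cost x = step_cost x + (\<Sum>k\<in>-{t}. pe x k * total_cost k)"
  unfolding total_cost_def by (rule Fmat_green)

text \<open>No hypothesis on \<open>x\<close> is needed: if \<open>Q x = 0\<close>, both sides are \<open>0\<close> because \<open>z / 0 = 0\<close>.\<close>
lemma Uavoid_eq: "Uavoid P w t \<alpha> x = total_cost x / Q x"
proof -
  have term_eq: "Fcond P w t \<alpha> x m * rcost P w t \<alpha> m = F x m * step_cost m / Q x" if "m \<in> -{t}" for m
  proof (cases "Q m = 0")
    case True
    then show ?thesis
      using step_cost_eq_0[of m] that by (simp add: Fcond_def)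
  next
    case False
    have "rcost P w t \<alpha> m = step_cost m / Q m"
      unfolding rcost_def step_cost_def by (simp add: sum_divide_distrib)
    then show ?thesis
      using False by (simp add: Fcond_def)
  qed
  have "Uavoid P w t \<alpha> x = (\<Sum>m\<in>-{t}. F x m * step_cost m / Q x)"
    unfolding Uavoid_def by (rule sum.cong) (simp_all add: term_eq)
  also have "\<dots> = total_cost x / Q x"
    by (simp add: total_cost_def sum_divide_distrib)
  finally show ?thesis .
qed

text \<open>Feasibility of the potential \<open>h\<close> is only required towards vertices that reach \<open>t\<close>, since
  \<open>Lmin\<close> is the junk value \<open>Inf {}\<close> elsewhere.\<close>
context
  fixes h :: "'v \<Rightarrow> real"
  assumes h_t: "h t = 0"
    and h_feasible: "\<And>x k. (x, k) \<in> E \<Longrightarrow> reaches E k t \<Longrightarrow> h x \<le> w x k + h k"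
begin

lemma potential_slack_nonneg: "0 \<le> pe x k * Q k * (w x k + h k - h x)"
proof (cases "0 < pe x k \<and> 0 < Q k")
  case True
  then have "h x \<le> w x k + h k"
    using h_feasible Pev_pos_iff Qabs_pos_iff by blast
  then show ?thesis
    using True by simp
next
  case False
  then have "pe x k * Q k = 0"
    using Pev_nonneg[of x k] Qabs_nonneg[of k] by (auto simp: order_le_less)
  then show ?thesis
    by (metis mult_zero_left order_refl)
qed

lemma total_cost_minus_potential:
  assumes "x \<noteq> t"
  shows "total_cost x - h x * Q x
    = (\<Sum>k\<in>-{t}. pe x k * (total_cost k - h k * Q k)) + (\<Sum>k\<in>UNIV. pe x k * Q k * (w x k + h k - h x))"
proof -
  define S where "S = (\<Sum>k\<in>-{t}. pe x k * (h k * Q k))"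
  have "(\<Sum>k\<in>UNIV. pe x k * Q k * (w x k + h k - h x))
      = (\<Sum>k\<in>UNIV. pe x k * w x k * Q k) + (\<Sum>k\<in>UNIV. pe x k * (h k * Q k))
        - h x * (\<Sum>k\<in>UNIV. pe x k * Q k)"
    by (simp add: algebra_simps sum.distrib sum_subtractf sum_distrib_left)
  also have "\<dots> = step_cost x + S - h x * Q x"
    using h_t Qabs_harmonic[OF assms] sum_UNIV_eq_add_sum_Compl[of "\<lambda>k. pe x k * (h k * Q k)" t]
    by (simp add: step_cost_def S_def)
  finally have slack: "(\<Sum>k\<in>UNIV. pe x k * Q k * (w x k + h k - h x)) = step_cost x + S - h x * Q x" .
  have "(\<Sum>k\<in>-{t}. pe x k * (total_cost k - h k * Q k)) = (\<Sum>k\<in>-{t}. pe x k * total_cost k) - S"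
    by (simp add: S_def right_diff_distrib sum_subtractf)
  then show ?thesis
    using slack total_cost_eq[OF assms] by linarith
qed

lemma total_cost_ge_potential: "h x * Q x \<le> total_cost x"
proof (cases "x = t")
  case True
  then show ?thesis
    by (simp add: h_t total_cost_t)
next
  case False
  have superharmonic:
    "(\<Sum>k\<in>-{t}. pe y k * (total_cost k - h k * Q k)) \<le> total_cost y - h y * Q y"
    if "y \<in> -{t}" for y
    using total_cost_minus_potential[of y] that sum_nonneg[OF potential_slack_nonneg] by simp
  have "0 \<le> total_cost x - h x * Q x"
    by (rule substochastic_superharmonic_nonneg[where S = "-{t}" and a = pe
          and g = "\<lambda>k. total_cost k - h k * Q k"])
      (use False superharmonic in \<open>simp_all add: Pev_nonneg row_sum_lt_1\<close>)
  then show ?thesis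
    by simp
qed

lemma Uavoid_potential_gap:
  assumes "x \<noteq> t" "reaches E x t"
  shows "Pcheck P w t \<alpha> x j * (w x j + h j - h x) \<le> Uavoid P w t \<alpha> x - h x"
proof -
  have Qx: "0 < Q x"
    using assms(2) Qabs_pos_iff by blast
  have "pe x j * Q j * (w x j + h j - h x) \<le> (\<Sum>k\<in>UNIV. pe x k * Q k * (w x k + h k - h x))"
    by (rule member_le_sum) (simp_all add: potential_slack_nonneg)
  also have "\<dots> \<le> total_cost x - h x * Q x"
  proof -
    have "0 \<le> (\<Sum>k\<in>-{t}. pe x k * (total_cost k - h k * Q k))"
      by (intro sum_nonneg mult_nonneg_nonneg Pev_nonneg) (simp add: total_cost_ge_potential)
    then show ?thesis
      using total_cost_minus_potential[OF assms(1)] by linarith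
  qed
  finally have "pe x j * Q j * (w x j + h j - h x) / Q x \<le> (total_cost x - h x * Q x) / Q x"
    using Qx by (simp add: divide_right_mono)
  then show ?thesis
    using Qx by (simp add: Pcheck_def Uavoid_eq diff_divide_distrib)
qed

end

end

theorem mainTheorem7:
  fixes E :: "('v::finite \<times> 'v) set"
    and P w :: "'v \<Rightarrow> 'v \<Rightarrow> real"
    and \<delta> \<alpha> :: real and s t j :: 'v
  assumes P_nonneg: "\<And>i j. P i j \<ge> 0"
    and P_stoch: "\<And>i. (\<Sum>j\<in>UNIV. P i j) = 1"
    and P_edge: "\<And>i j. P i j > 0 \<longleftrightarrow> (i, j) \<in> E"
    and w_pos: "\<And>i j. (i, j) \<in> E \<Longrightarrow> w i j > 0"
    and delta_pos: "\<delta> > 0"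
    and w_mult: "\<And>i j. (i, j) \<in> E \<Longrightarrow> \<exists>k::nat. k \<ge> 1 \<and> w i j = real k * \<delta>"
    and delta_max: "\<And>\<delta>'. \<delta>' > 0 \<Longrightarrow> (\<forall>i j. (i, j) \<in> E \<longrightarrow> (\<exists>k::nat. w i j = real k * \<delta>')) \<Longrightarrow> \<delta>' \<le> \<delta>"
    and st: "s \<noteq> t"
    and reach: "\<exists>p. is_path E s t p"
    and alpha: "0 < \<alpha>" "\<alpha> < 1"
    and eps: "Uavoid P w t \<alpha> s - Lmin E w s t < \<delta> / real (card {k. (s, k) \<in> E})"
    and j_nb: "(s, j) \<in> E"
    and j_max: "\<And>k. (s, k) \<in> E \<Longrightarrow> Pcheck P w t \<alpha> s k \<le> Pcheck P w t \<alpha> s j"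
  shows "\<exists>p. is_path E s t p \<and> path_cost w p = Lmin E w s t \<and>
           length p \<ge> 2 \<and> p ! 1 = j"
proof -
  interpret evaporating_network E P w \<alpha> t
    using P_nonneg P_stoch P_edge w_pos alpha by unfold_locales auto
  interpret lattice_costs E w \<delta>
    using delta_pos w_mult by unfold_locales blast+
  let ?L = "\<lambda>x. Lmin E w x t" and ?d = "real (card {k. (s, k) \<in> E})"
  have reach_s: "reaches E s t"
    using reach by (simp add: reaches_def)
  have Pcheck_ge: "1 / ?d \<le> Pcheck P w t \<alpha> s j"
    using max_Pcheck_ge_inverse_degree[OF st reach_s j_nb j_max] .
  have d_pos: "0 < 1 / ?d"
    using j_nb by (auto simp: card_gt_0_iff)
  then have reach_j: "reaches E j t"
    using Pcheck_ge by (intro reaches_of_Pcheck_pos[of s]) linarith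
  have "w s j + ?L j = ?L s"
  proof (rule ccontr)
    assume "w s j + ?L j \<noteq> ?L s"
    then have "1 / ?d * \<delta> \<le> Pcheck P w t \<alpha> s j * (w s j + ?L j - ?L s)"
      using Lmin_gap[OF j_nb reach_j] Pcheck_ge d_pos delta_pos by (intro mult_mono) linarith+
    also have "\<dots> \<le> Uavoid P w t \<alpha> s - ?L s"
      by (rule Uavoid_potential_gap[where h = ?L]) (simp_all add: Lmin_refl Lmin_triangle st reach_s)
    finally show False
      using eps by simp
  qed
  then show ?thesis
    using shortest_path_via[OF j_nb reach_j] by blast
qed

end
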